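(* Let $G$ be a connected graph and let $r\le r'$ be natural numbers. Let $q_{r,r'}:G_r\to G_{r'}$ be a covering with $p_r=p_{r'}\circ q_{r,r'}$, and let $p_{r,r'}:(G_{r'})_r\to G_{r'}$ be the $r$-local covering of $G_{r'}$. Then $p_{r,r'}$ and $q_{r,r'}$ are equivalent coverings of $G_{r'}$, and $p_r$ and $p_{r'}\circ p_{r,r'}$ are equivalent coverings of $G$. In particular, $(G_{r'})_r$ and $G_r$ are isomorphic graphs.
   Context: Graphs may have loops and parallel edges and are viewed as 1-complexes; covering spaces are connected. A cycle may be a loop or a pair of parallel edges; a closed walk once around a cycle $O$ traverses every edge of $O$ exactly once. For a connected graph $X$, a vertex $x_0$ and $s\in\mathbb{N}$, $\pi_1^s(X,x_0)$ is the subgroup of $\pi_1(X,x_0)$ generated by the classes of closed walks $W_0QW_0^-$, $W_0$ a walk from $x_0$ to a vertex $y$, $Q$ a closed walk at $y$ once around a cycle of length at most $s$, $W_0^-$ the reverse of $W_0$. The $s$-local covering $p_s:X_s\to X$ is the connected normal covering with characteristic subgroup $\pi_1^s(X,x_0)$. (A covering $q_{r,r'}$ as in the claim exists, and is unique up to equivalence.) Two coverings $q:X\to Y$, $q':X'\to Y$ are equivalent if there is a homeomorphism $h:X\to X'$ with $q'\circ h=q$. *)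

theory Defs
  imports Main
begin

text \<open>Graphs (loops and parallel edges allowed) are encoded combinatorially by darts
  (oriented edges): every edge contributes two darts exchanged by the fixed-point-free
  involution dinv; orig gives the initial vertex of a dart.  This is the standard
  combinatorial model of a 1-complex, and topological coverings of the 1-complex
  correspond to the combinatorial coverings defined below.\<close>

record ('v, 'd) graph =
  verts :: "'v set"
  darts :: "'d set"
  dinv  :: "'d \<Rightarrow> 'd"
  orig  :: "'d \<Rightarrow> 'v"

definition tgt :: "('v, 'd) graph \<Rightarrow> 'd \<Rightarrow> 'v" where
  "tgt X d = orig X (dinv X d)"

definition wf_graph :: "('v, 'd) graph \<Rightarrow> bool" where
  "wf_graph X \<longleftrightarrow>
     (\<forall>d\<in>darts X. orig X d \<in> verts X \<and> dinv X d \<in> darts X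
                   \<and> dinv X (dinv X d) = d \<and> dinv X d \<noteq> d)"

definition walk :: "('v, 'd) graph \<Rightarrow> 'v \<Rightarrow> 'v \<Rightarrow> 'd list \<Rightarrow> bool" where
  "walk X x y W \<longleftrightarrow>
     x \<in> verts X \<and> y \<in> verts X \<and> set W \<subseteq> darts X \<and>
     (W = [] \<longrightarrow> x = y) \<and>
     (W \<noteq> [] \<longrightarrow> orig X (hd W) = x \<and> tgt X (last W) = y) \<and>
     (\<forall>i. Suc i < length W \<longrightarrow> tgt X (W ! i) = orig X (W ! Suc i))"

definition rwalk :: "('v, 'd) graph \<Rightarrow> 'd list \<Rightarrow> 'd list" where
  "rwalk X W = rev (map (dinv X) W)"

definition connected_graph :: "('v, 'd) graph \<Rightarrow> bool" where
  "connected_graph X \<longleftrightarrow> verts X \<noteq> {} \<and> (\<forall>x\<in>verts X. \<forall>y\<in>verts X. \<exists>W. walk X x y W)"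

text \<open>A closed walk once around a cycle (a loop, a pair of parallel edges, or a cycle of
  length at least 3): a nonempty closed walk through pairwise distinct vertices using
  pairwise distinct edges.\<close>
definition cycle_walk :: "('v, 'd) graph \<Rightarrow> 'd list \<Rightarrow> bool" where
  "cycle_walk X Q \<longleftrightarrow> Q \<noteq> [] \<and> walk X (orig X (hd Q)) (orig X (hd Q)) Q \<and>
     distinct (map (orig X) Q) \<and>
     (\<forall>i<length Q. \<forall>j<length Q. i \<noteq> j \<longrightarrow> Q ! i \<noteq> Q ! j \<and> Q ! i \<noteq> dinv X (Q ! j))"

text \<open>pi1s X s x0 W: W is a closed walk at x0 whose homotopy class lies in the subgroup
  pi_1^s(X,x0), i.e. W is homotopic (by insertion/deletion of backtracks) to a product of
  the generators W0 Q W0^- (and their inverses).\<close>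
inductive pi1s :: "('v, 'd) graph \<Rightarrow> nat \<Rightarrow> 'v \<Rightarrow> 'd list \<Rightarrow> bool"
  for X :: "('v, 'd) graph" and s :: nat and x0 :: 'v where
  empty: "x0 \<in> verts X \<Longrightarrow> pi1s X s x0 []"
| gen: "\<lbrakk>pi1s X s x0 W; walk X x0 y W0; cycle_walk X Q; orig X (hd Q) = y; length Q \<le> s\<rbrakk>
        \<Longrightarrow> pi1s X s x0 (W @ W0 @ Q @ rwalk X W0)"
| gen_inv: "\<lbrakk>pi1s X s x0 W; walk X x0 y W0; cycle_walk X Q; orig X (hd Q) = y; length Q \<le> s\<rbrakk>
        \<Longrightarrow> pi1s X s x0 (W @ W0 @ rwalk X Q @ rwalk X W0)"
| del: "pi1s X s x0 (A @ [d, dinv X d] @ B) \<Longrightarrow> pi1s X s x0 (A @ B)"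
| ins: "\<lbrakk>pi1s X s x0 (A @ B); walk X x0 x0 (A @ [d, dinv X d] @ B)\<rbrakk>
        \<Longrightarrow> pi1s X s x0 (A @ [d, dinv X d] @ B)"

type_synonym ('v, 'd, 'w, 'e) gmap = "('v \<Rightarrow> 'w) \<times> ('d \<Rightarrow> 'e)"

definition gcomp :: "('w, 'e, 'u, 'f) gmap \<Rightarrow> ('v, 'd, 'w, 'e) gmap \<Rightarrow> ('v, 'd, 'u, 'f) gmap" where
  "gcomp p q = (fst p \<circ> fst q, snd p \<circ> snd q)"

definition graph_hom :: "('v, 'd) graph \<Rightarrow> ('v, 'd, 'w, 'e) gmap \<Rightarrow> ('w, 'e) graph \<Rightarrow> bool" where
  "graph_hom X h Y \<longleftrightarrow>
     (\<forall>v\<in>verts X. fst h v \<in> verts Y) \<and> (\<forall>d\<in>darts X. snd h d \<in> darts Y) \<and>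
     (\<forall>d\<in>darts X. snd h (dinv X d) = dinv Y (snd h d) \<and> orig Y (snd h d) = fst h (orig X d))"

definition covering :: "('w, 'e) graph \<Rightarrow> ('w, 'e, 'v, 'd) gmap \<Rightarrow> ('v, 'd) graph \<Rightarrow> bool" where
  "covering X' p X \<longleftrightarrow> wf_graph X' \<and> wf_graph X \<and> connected_graph X' \<and>
     graph_hom X' p X \<and> fst p ` verts X' = verts X \<and>
     (\<forall>v\<in>verts X'. bij_betw (snd p) {d\<in>darts X'. orig X' d = v} {d\<in>darts X. orig X d = fst p v})"

text \<open>p is an s-local covering of X: a (connected) covering whose characteristic subgroup
  (classes of closed walks at x0 lifting to closed walks at x0') is pi_1^s(X,x0).\<close>
definition local_covering :: "nat \<Rightarrow> ('w, 'e) graph \<Rightarrow> ('w, 'e, 'v, 'd) gmap \<Rightarrow> ('v, 'd) graph \<Rightarrow> bool" where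
  "local_covering s X' p X \<longleftrightarrow> covering X' p X \<and>
     (\<exists>x0\<in>verts X. \<exists>x0'\<in>verts X'. fst p x0' = x0 \<and>
        (\<forall>W. walk X x0 x0 W \<longrightarrow>
              ((\<exists>W'. walk X' x0' x0' W' \<and> map (snd p) W' = W) \<longleftrightarrow> pi1s X s x0 W)))"

definition graph_iso :: "('v, 'd) graph \<Rightarrow> ('v, 'd, 'w, 'e) gmap \<Rightarrow> ('w, 'e) graph \<Rightarrow> bool" where
  "graph_iso X h Y \<longleftrightarrow> graph_hom X h Y \<and> bij_betw (fst h) (verts X) (verts Y) \<and>
     bij_betw (snd h) (darts X) (darts Y)"

definition isomorphic_graphs :: "('v, 'd) graph \<Rightarrow> ('w, 'e) graph \<Rightarrow> bool" where
  "isomorphic_graphs X Y \<longleftrightarrow> (\<exists>h. graph_iso X h Y)"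

definition equivalent_coverings ::
  "('v, 'd) graph \<Rightarrow> ('v, 'd, 'u, 'f) gmap \<Rightarrow> ('w, 'e) graph \<Rightarrow> ('w, 'e, 'u, 'f) gmap \<Rightarrow> bool" where
  "equivalent_coverings X q X' q' \<longleftrightarrow>
     (\<exists>h. graph_iso X h X' \<and> (\<forall>v\<in>verts X. fst q' (fst h v) = fst q v) \<and>
          (\<forall>d\<in>darts X. snd q' (snd h d) = snd q d))"

end

theory Submission
  imports Defs
begin

text \<open>A connected covering is determined up to equivalence by the closed walks at a base
  vertex that lift to closed walks.  Take a closed walk W in G_r' and its image W' in G.  Since
  p_r = p_r' o q and walks lift uniquely along p_r', W lifts to a closed walk along q iff W' lifts
  to a closed walk along p_r, i.e. iff W' lies in pi_1^r(G).  This happens iff W lies in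
  pi_1^r(G_r'): a generator of pi_1^r(G_r') maps to a conjugate of a closed walk of length at
  most r, and such walks are products of conjugates of cycles of length at most r and of
  backtracks; conversely every cycle of G of length at most r <= r' lifts to a cycle of G_r',
  since it lies in the characteristic subgroup pi_1^r'(G) of p_r'.  Hence q is itself an r-local
  covering of G_r', and any two r-local coverings of the same graph are equivalent.\<close>

section \<open>Walks and graph homomorphisms\<close>

lemma wf_graphD:
  assumes "wf_graph X" "d \<in> darts X"
  shows "orig X d \<in> verts X" "tgt X d \<in> verts X" "dinv X d \<in> darts X"
    "dinv X (dinv X d) = d" "orig X (dinv X d) = tgt X d" "tgt X (dinv X d) = orig X d"
  using assms by (auto simp: wf_graph_def tgt_def)

lemma walk_verts: "walk X x y W \<Longrightarrow> x \<in> verts X \<and> y \<in> verts X"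
  by (simp add: walk_def)

lemma walk_darts: "walk X x y W \<Longrightarrow> set W \<subseteq> darts X"
  by (simp add: walk_def)

lemma walk_Nil [simp]: "walk X x y [] \<longleftrightarrow> x \<in> verts X \<and> x = y"
  by (auto simp: walk_def)

lemma walk_Cons:
  assumes "wf_graph X"
  shows "walk X x y (d # W) \<longleftrightarrow> d \<in> darts X \<and> orig X d = x \<and> walk X (tgt X d) y W"
  using assms by (cases W) (auto simp: walk_def wf_graph_def tgt_def nth_Cons split: nat.splits)

lemma walk_append:
  assumes "wf_graph X"
  shows "walk X x z (A @ B) \<longleftrightarrow> (\<exists>y. walk X x y A \<and> walk X y z B)"
  by (induction A arbitrary: x) (auto simp: walk_Cons[OF assms] dest: walk_verts)

lemma walk_appendI:
  "wf_graph X \<Longrightarrow> walk X x y A \<Longrightarrow> walk X y z B \<Longrightarrow> walk X x z (A @ B)"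
  by (metis walk_append)

lemma walk_snoc:
  assumes "wf_graph X" "walk X x y W" "d \<in> darts X" "orig X d = y"
  shows "walk X x (tgt X d) (W @ [d])"
  using assms by (auto simp: walk_append walk_Cons wf_graphD)

lemma walk_end_unique: "walk X x y W \<Longrightarrow> walk X x z W \<Longrightarrow> y = z"
  by (cases "W = []") (auto simp: walk_def)

lemma walk_backtrack_iff:
  assumes "wf_graph X"
  shows "walk X x y (A @ [d, dinv X d] @ B) \<longleftrightarrow>
    (\<exists>a. walk X x a A \<and> walk X a y B \<and> d \<in> darts X \<and> orig X d = a)"
  using assms by (auto simp: walk_append walk_Cons wf_graphD)

lemma walk_take_drop:
  assumes "wf_graph X" "walk X x y C" "k < length C"
  shows "walk X x (orig X (C ! k)) (take k C)" "walk X (orig X (C ! k)) y (drop k C)"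
proof -
  obtain m where m: "walk X x m (take k C)" "walk X m y (drop k C)"
    using assms(2) walk_append[OF assms(1), of x y "take k C" "drop k C"] by auto
  moreover have "m = orig X (C ! k)"
    using m(2) assms(3) by (auto simp: walk_def hd_drop_conv_nth)
  ultimately show "walk X x (orig X (C ! k)) (take k C)" "walk X (orig X (C ! k)) y (drop k C)"
    by auto
qed

lemma closed_walk_tgt_nth:
  assumes "walk X a a C" "k < length C"
  shows "tgt X (C ! k) = orig X (C ! (Suc k mod length C))"
  using assms
  by (cases "Suc k < length C") (auto simp: walk_def hd_conv_nth last_conv_nth not_less_eq less_Suc_eq)

lemma rwalk_Nil [simp]: "rwalk X [] = []"
  by (simp add: rwalk_def)

lemma rwalk_Cons: "rwalk X (d # W) = rwalk X W @ [dinv X d]"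
  by (simp add: rwalk_def)

lemma rwalk_append [simp]: "rwalk X (A @ B) = rwalk X B @ rwalk X A"
  by (simp add: rwalk_def)

lemma length_rwalk [simp]: "length (rwalk X W) = length W"
  by (simp add: rwalk_def)

lemma rwalk_rwalk:
  "wf_graph X \<Longrightarrow> set W \<subseteq> darts X \<Longrightarrow> rwalk X (rwalk X W) = W"
  by (induction W) (auto simp: rwalk_def wf_graph_def)

lemma walk_rwalk:
  assumes "wf_graph X"
  shows "walk X x y W \<Longrightarrow> walk X y x (rwalk X W)"
  by (induction W arbitrary: x) (auto simp: rwalk_Cons walk_append walk_Cons wf_graphD assms)

lemma graph_homD:
  assumes "graph_hom X' p X"
  shows "v \<in> verts X' \<Longrightarrow> fst p v \<in> verts X" "d \<in> darts X' \<Longrightarrow> snd p d \<in> darts X"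
    "d \<in> darts X' \<Longrightarrow> snd p (dinv X' d) = dinv X (snd p d)"
    "d \<in> darts X' \<Longrightarrow> orig X (snd p d) = fst p (orig X' d)"
  using assms by (auto simp: graph_hom_def)

lemma graph_hom_tgt:
  assumes "graph_hom X' p X" "wf_graph X'" "d \<in> darts X'"
  shows "fst p (tgt X' d) = tgt X (snd p d)"
proof -
  have "dinv X' d \<in> darts X'" using assms(2,3) by (rule wf_graphD)
  then show ?thesis
    by (simp add: tgt_def graph_homD(3)[OF assms(1,3), symmetric] graph_homD(4)[OF assms(1)])
qed

lemma graph_hom_walk:
  assumes "graph_hom X' p X" "wf_graph X'" "wf_graph X"
  shows "walk X' x y W \<Longrightarrow> walk X (fst p x) (fst p y) (map (snd p) W)"
  using assms
  by (induction W arbitrary: x)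
    (auto simp: walk_Cons graph_hom_def simp flip: graph_hom_tgt[OF assms(1,2)])

lemma graph_hom_rwalk:
  "graph_hom X' p X \<Longrightarrow> set W \<subseteq> darts X' \<Longrightarrow> map (snd p) (rwalk X' W) = rwalk X (map (snd p) W)"
  by (induction W) (auto simp: rwalk_Cons graph_hom_def)

section \<open>Lifting walks along coverings\<close>

lemma coveringD:
  assumes "covering X' p X"
  shows "wf_graph X'" "wf_graph X" "graph_hom X' p X"
    "x \<in> verts X' \<Longrightarrow> y \<in> verts X' \<Longrightarrow> \<exists>W. walk X' x y W"
  using assms by (auto simp: covering_def connected_graph_def)

lemma covering_dart_inj:
  assumes "covering X' p X" "d1 \<in> darts X'" "d2 \<in> darts X'"
    "orig X' d1 = orig X' d2" "snd p d1 = snd p d2"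
  shows "d1 = d2"
proof -
  have "orig X' d1 \<in> verts X'" using assms(1,2) by (simp add: coveringD wf_graphD)
  then have "inj_on (snd p) {d \<in> darts X'. orig X' d = orig X' d1}"
    using assms(1) by (simp add: covering_def bij_betw_def)
  then show ?thesis using assms(2-5) by (auto dest: inj_onD)
qed

definition dart_lift :: "('w, 'e) graph \<Rightarrow> ('w, 'e, 'v, 'd) gmap \<Rightarrow> 'w \<Rightarrow> 'd \<Rightarrow> 'e" where
  "dart_lift X' p v d = (THE d'. d' \<in> darts X' \<and> orig X' d' = v \<and> snd p d' = d)"

lemma dart_lift:
  assumes "covering X' p X" "v \<in> verts X'" "d \<in> darts X" "orig X d = fst p v"
  shows "dart_lift X' p v d \<in> darts X'" "orig X' (dart_lift X' p v d) = v"
    "snd p (dart_lift X' p v d) = d"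
proof -
  have "bij_betw (snd p) {d' \<in> darts X'. orig X' d' = v} {d \<in> darts X. orig X d = fst p v}"
    using assms(1,2) by (simp add: covering_def)
  then have "d \<in> snd p ` {d' \<in> darts X'. orig X' d' = v}"
    using assms(3,4) by (simp add: bij_betw_def)
  then obtain d' where "d' \<in> darts X'" "orig X' d' = v" "snd p d' = d"
    by blast
  then have "\<exists>!d'. d' \<in> darts X' \<and> orig X' d' = v \<and> snd p d' = d"
    using covering_dart_inj[OF assms(1)] by metis
  from theI'[OF this] show "dart_lift X' p v d \<in> darts X'" "orig X' (dart_lift X' p v d) = v"
    "snd p (dart_lift X' p v d) = d"
    unfolding dart_lift_def by auto
qed

lemma dart_lift_unique:
  assumes "covering X' p X" "d' \<in> darts X'"
  shows "dart_lift X' p (orig X' d') (snd p d') = d'"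
proof -
  have "orig X' d' \<in> verts X'" "snd p d' \<in> darts X" "orig X (snd p d') = fst p (orig X' d')"
    using assms(2) coveringD[OF assms(1)] by (auto simp: wf_graphD graph_homD)
  then show ?thesis
    using dart_lift[OF assms(1)] covering_dart_inj[OF assms(1) _ assms(2)] by metis
qed

lemma walk_lift_exists:
  assumes "covering X' p X" "v \<in> verts X'" "walk X (fst p v) y W"
  shows "\<exists>W' y'. walk X' v y' W' \<and> map (snd p) W' = W \<and> fst p y' = y"
  using assms(2,3)
proof (induction W arbitrary: v)
  case (Cons d W)
  define d' where "d' = dart_lift X' p v d"
  have d: "d \<in> darts X" "orig X d = fst p v" "walk X (tgt X d) y W"
    using Cons.prems(2) by (auto simp: walk_Cons coveringD[OF assms(1)])
  then have d': "d' \<in> darts X'" "orig X' d' = v" "snd p d' = d"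
    using dart_lift[OF assms(1) Cons.prems(1)] by (auto simp: d'_def)
  then have "tgt X' d' \<in> verts X'" "fst p (tgt X' d') = tgt X d"
    using coveringD[OF assms(1)] by (auto simp: wf_graphD graph_hom_tgt)
  then obtain W' y' where "walk X' (tgt X' d') y' W'" "map (snd p) W' = W" "fst p y' = y"
    using Cons.IH d(3) by metis
  then show ?case
    using d' by (intro exI[of _ "d' # W'"] exI[of _ y']) (simp add: walk_Cons coveringD[OF assms(1)])
qed auto

lemma walk_lift_unique:
  assumes "covering X' p X" "walk X' x a A" "walk X' x b B" "map (snd p) A = map (snd p) B"
  shows "A = B \<and> a = b"
  using assms(2-4)
proof (induction A arbitrary: x B)
  case Nil
  then show ?case by simp
next
  case (Cons d A)
  then obtain e B' where B: "B = e # B'" by (cases B) auto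
  have "d = e"
    using Cons.prems B covering_dart_inj[OF assms(1)] by (auto simp: walk_Cons coveringD[OF assms(1)])
  then show ?case
    using Cons B by (auto simp: walk_Cons coveringD[OF assms(1)])
qed

lemma walk_lift_unique_end:
  assumes "covering X' p X" "walk X' a y A" "walk X' b y B" "map (snd p) A = map (snd p) B"
  shows "A = B \<and> a = b"
proof -
  note X' = coveringD[OF assms(1)]
  have "map (snd p) (rwalk X' A) = map (snd p) (rwalk X' B)"
    using assms(2-4) by (simp add: graph_hom_rwalk[OF X'(3)] walk_darts)
  then have "rwalk X' A = rwalk X' B \<and> a = b"
    using walk_lift_unique[OF assms(1) walk_rwalk[OF X'(1) assms(2)] walk_rwalk[OF X'(1) assms(3)]]
    by blast
  then show ?thesis
    using rwalk_rwalk[OF X'(1)] walk_darts[OF assms(2)] walk_darts[OF assms(3)] by metis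
qed

lemma walk_map_append_split:
  assumes "wf_graph X'" "walk X' x z V'" "map f V' = A @ B"
  obtains A' B' a where "V' = A' @ B'" "map f A' = A" "map f B' = B" "walk X' x a A'" "walk X' a z B'"
  using assms by (auto simp: map_eq_append_conv walk_append)

lemma walk_map_append3_split:
  assumes "wf_graph X'" "walk X' x z V'" "map f V' = A @ B @ C"
  obtains A' B' C' a b where "V' = A' @ B' @ C'" "map f A' = A" "map f B' = B" "map f C' = C"
    "walk X' x a A'" "walk X' a b B'" "walk X' b z C'"
proof -
  obtain A' R' a where "V' = A' @ R'" "map f A' = A" "map f R' = B @ C" "walk X' x a A'" "walk X' a z R'"
    using walk_map_append_split[OF assms] .
  moreover obtain B' C' b where "R' = B' @ C'" "map f B' = B" "map f C' = C" "walk X' a b B'" "walk X' b z C'"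
    using walk_map_append_split[OF assms(1) calculation(5,3)] .
  ultimately show ?thesis using that by simp
qed

text \<open>W represents an element of the characteristic subgroup p_*(pi_1(X', x')) of p.\<close>

definition lifts_closed :: "('w, 'e) graph \<Rightarrow> ('w, 'e, 'v, 'd) gmap \<Rightarrow> 'w \<Rightarrow> 'd list \<Rightarrow> bool" where
  "lifts_closed X' p x' W \<longleftrightarrow> (\<exists>W'. walk X' x' x' W' \<and> map (snd p) W' = W)"

lemma lifts_closed_conj_iff:
  assumes c: "covering X' p X" and P': "walk X' x' y' P'"
  shows "lifts_closed X' p x' (map (snd p) P' @ W @ rwalk X (map (snd p) P')) \<longleftrightarrow>
    lifts_closed X' p y' W"
    (is "lifts_closed X' p x' ?V \<longleftrightarrow> _")
proof -
  note X' = coveringD[OF c]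
  have P'_rev: "walk X' y' x' (rwalk X' P')" "map (snd p) (rwalk X' P') = rwalk X (map (snd p) P')"
    using P' by (simp_all add: walk_rwalk X' graph_hom_rwalk walk_darts)
  show ?thesis
  proof
    assume "lifts_closed X' p x' ?V"
    then obtain V' where V': "walk X' x' x' V'" "map (snd p) V' = ?V"
      by (auto simp: lifts_closed_def)
    then obtain A' B' C' a b where split: "V' = A' @ B' @ C'" "map (snd p) A' = map (snd p) P'"
      "map (snd p) B' = W" "map (snd p) C' = rwalk X (map (snd p) P')"
      "walk X' x' a A'" "walk X' a b B'" "walk X' b x' C'"
      by (rule walk_map_append3_split[OF X'(1)])
    have "a = y'" using walk_lift_unique[OF c split(5) P' split(2)] by blast
    moreover have "b = y'"
      using walk_lift_unique_end[OF c split(7) P'_rev(1)] split(4) P'_rev(2) by simp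
    ultimately show "lifts_closed X' p y' W" using split(3,6) by (auto simp: lifts_closed_def)
  next
    assume "lifts_closed X' p y' W"
    then obtain W' where W': "walk X' y' y' W'" "map (snd p) W' = W"
      by (auto simp: lifts_closed_def)
    have "walk X' x' x' (P' @ W' @ rwalk X' P')"
      using P' W'(1) P'_rev(1) walk_append[OF X'(1)] by blast
    moreover have "map (snd p) (P' @ W' @ rwalk X' P') = ?V"
      using W'(2) P'_rev(2) by simp
    ultimately show "lifts_closed X' p x' ?V" unfolding lifts_closed_def by blast
  qed
qed

section \<open>The subgroup generated by short cycles\<close>

lemma pi1s_closed_walk:
  assumes "wf_graph X"
  shows "pi1s X s x W \<Longrightarrow> walk X x x W"
proof (induction rule: pi1s.induct)
  case (gen W y W0 Q)
  have "walk X y y Q" using gen.hyps(3,4) by (simp add: cycle_walk_def)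
  then show ?case
    using gen.IH gen.hyps(2) walk_rwalk[OF assms gen.hyps(2)] by (blast intro: walk_appendI[OF assms])
next
  case (gen_inv W y W0 Q)
  have "walk X y y (rwalk X Q)" using gen_inv.hyps(3,4) walk_rwalk[OF assms] by (simp add: cycle_walk_def)
  then show ?case
    using gen_inv.IH gen_inv.hyps(2) walk_rwalk[OF assms gen_inv.hyps(2)] by (blast intro: walk_appendI[OF assms])
next
  case (del A d B)
  then show ?case
    using walk_backtrack_iff[OF assms, of x x A d B] walk_appendI[OF assms] by blast
qed simp_all

lemma pi1s_cancel: "pi1s X s x (A @ Q @ rwalk X Q @ B) \<Longrightarrow> pi1s X s x (A @ B)"
proof (induction Q arbitrary: A B)
  case (Cons d Q)
  have "pi1s X s x ((A @ [d]) @ Q @ rwalk X Q @ ([dinv X d] @ B))"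
    using Cons.prems by (simp add: rwalk_Cons)
  then have "pi1s X s x (A @ [d, dinv X d] @ B)"
    using Cons.IH by fastforce
  then show ?case by (rule pi1s.del)
qed simp

lemma pi1s_insert:
  assumes "wf_graph X"
  shows "pi1s X s x (A @ B) \<Longrightarrow> walk X x a A \<Longrightarrow> walk X a b Q \<Longrightarrow> walk X a x B \<Longrightarrow>
    pi1s X s x (A @ Q @ rwalk X Q @ B)"
proof (induction Q arbitrary: A a B)
  case (Cons d Q)
  have d: "d \<in> darts X" "orig X d = a" and Q: "walk X (tgt X d) b Q"
    using Cons.prems(3) by (auto simp: walk_Cons[OF assms])
  have "walk X x x (A @ [d, dinv X d] @ B)"
    using Cons.prems(2,4) d walk_backtrack_iff[OF assms] by blast
  then have "pi1s X s x ((A @ [d]) @ ([dinv X d] @ B))"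
    using pi1s.ins[OF Cons.prems(1)] by simp
  moreover have "walk X x (tgt X d) (A @ [d])" "walk X (tgt X d) x ([dinv X d] @ B)"
    using Cons.prems(2,4) d by (auto simp: walk_snoc[OF assms] walk_Cons[OF assms] wf_graphD[OF assms])
  ultimately have "pi1s X s x ((A @ [d]) @ Q @ rwalk X Q @ ([dinv X d] @ B))"
    using Cons.IH[OF _ _ Q] by blast
  then show ?case by (simp add: rwalk_Cons)
qed simp

lemma pi1s_append:
  assumes "wf_graph X" "pi1s X s x U"
  shows "pi1s X s x V \<Longrightarrow> pi1s X s x (U @ V)"
proof (induction rule: pi1s.induct)
  case empty
  then show ?case using assms(2) by simp
next
  case (gen W y W0 Q)
  then show ?case using pi1s.gen[of X s x "U @ W" y W0 Q] by simp
next
  case (gen_inv W y W0 Q)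
  then show ?case using pi1s.gen_inv[of X s x "U @ W" y W0 Q] by simp
next
  case (del A d B)
  then show ?case using pi1s.del[of X s x "U @ A" d B] by simp
next
  case (ins A B d)
  have "walk X x x (U @ A @ [d, dinv X d] @ B)"
    using pi1s_closed_walk[OF assms] ins.hyps(2) walk_append[OF assms(1)] by blast
  then show ?case using pi1s.ins[of X s x "U @ A" B d] ins.IH by simp
qed

lemma pi1s_conj:
  assumes wf: "wf_graph X" and P: "walk X x y P"
  shows "pi1s X s y W \<Longrightarrow> pi1s X s x (P @ W @ rwalk X P)"
proof (induction rule: pi1s.induct)
  have conj_append: "pi1s X s x (P @ (W @ V) @ rwalk X P)"
    if "pi1s X s x ((P @ W @ rwalk X P) @ P @ V @ rwalk X P)" for W V
  proof -
    have "pi1s X s x ((P @ W) @ rwalk X P @ rwalk X (rwalk X P) @ (V @ rwalk X P))"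
      using that rwalk_rwalk[OF wf walk_darts[OF P]] by simp
    then show ?thesis using pi1s_cancel by fastforce
  qed
  {
    case empty
    have x: "x \<in> verts X" using walk_verts[OF P] by simp
    then have "pi1s X s x ([] @ [])" by (simp add: pi1s.empty)
    from pi1s_insert[OF wf this _ P] show ?case using x by simp
  next
    case (gen W z W0 Q)
    have "walk X x z (P @ W0)" using P gen.hyps(2) walk_append[OF wf] by blast
    then have "pi1s X s x ((P @ W @ rwalk X P) @ (P @ W0) @ Q @ rwalk X (P @ W0))"
      using pi1s.gen[OF gen.IH _ gen.hyps(3-5)] by blast
    then show ?case using conj_append[of W "W0 @ Q @ rwalk X W0"] by simp
  next
    case (gen_inv W z W0 Q)
    have "walk X x z (P @ W0)" using P gen_inv.hyps(2) walk_append[OF wf] by blast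
    then have "pi1s X s x ((P @ W @ rwalk X P) @ (P @ W0) @ rwalk X Q @ rwalk X (P @ W0))"
      using pi1s.gen_inv[OF gen_inv.IH _ gen_inv.hyps(3-5)] by blast
    then show ?case using conj_append[of W "W0 @ rwalk X Q @ rwalk X W0"] by simp
  next
    case (del A d B)
    then show ?case using pi1s.del[of X s x "P @ A" d "B @ rwalk X P"] by simp
  next
    case (ins A B d)
    have "walk X x x (P @ (A @ [d, dinv X d] @ B) @ rwalk X P)"
      using P ins.hyps(2) walk_rwalk[OF wf P] walk_append[OF wf] by blast
    then show ?case using pi1s.ins[of X s x "P @ A" "B @ rwalk X P" d] ins.IH by simp
  }
qed

lemma pi1s_conj_iff:
  assumes wf: "wf_graph X" and P: "walk X x y P"
  shows "pi1s X s x (P @ W @ rwalk X P) \<longleftrightarrow> pi1s X s y W"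
proof
  have rr: "rwalk X (rwalk X P) = P" using rwalk_rwalk[OF wf walk_darts[OF P]] .
  assume "pi1s X s x (P @ W @ rwalk X P)"
  then have "pi1s X s y (rwalk X P @ (P @ W @ rwalk X P) @ rwalk X (rwalk X P))"
    by (rule pi1s_conj[OF wf walk_rwalk[OF wf P]])
  then have "pi1s X s y ([] @ rwalk X P @ rwalk X (rwalk X P) @ (W @ rwalk X P @ rwalk X (rwalk X P)))"
    using rr by simp
  then have "pi1s X s y (W @ rwalk X P @ rwalk X (rwalk X P) @ [])"
    using pi1s_cancel by fastforce
  then show "pi1s X s y W" using pi1s_cancel[of X s y W "rwalk X P" "[]"] by simp
qed (rule pi1s_conj[OF wf P])

lemma Suc_mod_mutual_eq_2:
  fixes i j n :: nat
  assumes "i < n" "j < n" "i \<noteq> j" "i = Suc j mod n" "j = Suc i mod n"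
  shows "n = 2"
proof (cases "Suc j < n")
  case True
  then have i: "i = Suc j" using assms(4) by simp
  have "\<not> Suc i < n" using assms(5) i by auto
  then have n: "Suc i = n" using assms(1) by simp
  then have "j = 0" using assms(5) by (metis mod_self)
  then show ?thesis using i n by simp
next
  case False
  then have n: "Suc j = n" using assms(2) by simp
  then have i: "i = 0" using assms(4) by (metis mod_self)
  then have "Suc 0 < n" using assms(3) n by linarith
  then have "j = 1" using assms(5) i by (metis One_nat_def mod_less)
  then show ?thesis using n by simp
qed

lemma cycle_walkI:
  assumes wf: "wf_graph X" and C: "walk X a a C" "C \<noteq> []" "distinct (map (orig X) C)"
    and no_backtrack: "\<And>d. C \<noteq> [d, dinv X d]"
  shows "cycle_walk X C"
proof -
  let ?n = "length C"
  have orig_inj: "i = j" if "i < ?n" "j < ?n" "orig X (C ! i) = orig X (C ! j)" for i j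
    using C(3) that by (metis distinct_conv_nth length_map nth_map)
  have C_darts: "C ! i \<in> darts X" if "i < ?n" for i
    using walk_darts[OF C(1)] that by auto
  have succ: "j = Suc i mod ?n" if "i < ?n" "j < ?n" "C ! j = dinv X (C ! i)" for i j
  proof (rule orig_inj[OF that(2)])
    show "Suc i mod ?n < ?n" using C(2) by simp
    show "orig X (C ! j) = orig X (C ! (Suc i mod ?n))"
      using that(3) closed_walk_tgt_nth[OF C(1) that(1)] wf_graphD(5)[OF wf C_darts[OF that(1)]]
      by simp
  qed
  \<comment> \<open>Two darts of C reverse to each other each follow the other cyclically; this forces
    length 2, i.e. a backtrack.\<close>
  have "C ! i \<noteq> dinv X (C ! j)" if ij: "i < ?n" "j < ?n" "i \<noteq> j" for i j
  proof
    assume eq: "C ! i = dinv X (C ! j)"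
    then have eq': "C ! j = dinv X (C ! i)" using wf_graphD(4)[OF wf C_darts[OF ij(2)]] by simp
    have "?n = 2" using Suc_mod_mutual_eq_2[OF ij succ[OF ij(2,1) eq] succ[OF ij(1,2) eq']] .
    then obtain c0 c1 where C2: "C = [c0, c1]"
      by (auto simp: numeral_2_eq_2 length_Suc_conv)
    have "i = 0 \<and> j = 1 \<or> i = 1 \<and> j = 0" using ij \<open>?n = 2\<close> by auto
    then have "C ! 1 = dinv X (C ! 0)" using eq eq' by auto
    then show False using no_backtrack[of c0] C2 by simp
  qed
  moreover have "C ! i \<noteq> C ! j" if "i < ?n" "j < ?n" "i \<noteq> j" for i j
    using orig_inj that by metis
  moreover have "orig X (hd C) = a" using C(1,2) by (simp add: walk_def)
  ultimately show ?thesis using C by (simp add: cycle_walk_def)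
qed

lemma closed_walk_repeated_vertex:
  assumes wf: "wf_graph X" and C: "walk X a a C" "\<not> distinct (map (orig X) C)"
  obtains C1 C2 C3 v where "C = C1 @ C2 @ C3" "walk X a v C1" "walk X v v C2" "walk X v a C3"
    "C2 \<noteq> []" "C3 \<noteq> []"
proof -
  obtain i j where ij: "i < j" "j < length C" "orig X (C ! i) = orig X (C ! j)"
    using C(2) by (auto simp: distinct_conv_nth) (metis linorder_neqE_nat)
  define v where "v = orig X (C ! i)"
  have "walk X a v (take i C)" "walk X v a (drop i C)"
    using walk_take_drop[OF wf C(1), of i] ij by (auto simp: v_def)
  moreover have "drop i C ! (j - i) = C ! j" using ij by simp
  then have "walk X v v (take (j - i) (drop i C))" "walk X v a (drop (j - i) (drop i C))"
    using walk_take_drop[OF wf \<open>walk X v a (drop i C)\<close>, of "j - i"] ij by (auto simp: v_def)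
  moreover have "C = take i C @ take (j - i) (drop i C) @ drop (j - i) (drop i C)"
    by (metis append_take_drop_id)
  ultimately show ?thesis using that ij by simp
qed

lemma closed_walk_in_pi1s:
  assumes wf: "wf_graph X"
  shows "walk X a a C \<Longrightarrow> length C \<le> s \<Longrightarrow> pi1s X s a C"
proof (induction "length C" arbitrary: C a rule: less_induct)
  case less
  have a: "a \<in> verts X" using walk_verts[OF less.prems(1)] by simp
  consider "C = []" | d where "C = [d, dinv X d]" | "cycle_walk X C"
    | "\<not> distinct (map (orig X) C)"
    using cycle_walkI[OF wf less.prems(1)] by blast
  then show ?case
  proof cases
    case 1
    then show ?thesis using a by (simp add: pi1s.empty)
  next
    case (2 d)
    then show ?thesis
      using pi1s.ins[of X s a "[]" "[]" d] pi1s.empty[OF a] less.prems(1) by simp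
  next
    case 3
    then have "orig X (hd C) = a" using less.prems(1) by (simp add: cycle_walk_def walk_def)
    moreover have "walk X a a []" using a by simp
    ultimately show ?thesis
      using pi1s.gen[OF pi1s.empty[OF a] _ 3 _ less.prems(2)] by fastforce
  next
    case 4
    then obtain C1 C2 C3 v where split: "C = C1 @ C2 @ C3" "walk X a v C1" "walk X v v C2"
      "walk X v a C3" "C2 \<noteq> []" "C3 \<noteq> []"
      using closed_walk_repeated_vertex[OF wf less.prems(1)] by blast
    \<comment> \<open>C1 C2 C3 is the product of C1 C2 (rwalk C1) and C1 C3.\<close>
    have "pi1s X s a (C1 @ C3)"
      using less.hyps[of "C1 @ C3"] less.prems(2) split walk_appendI[OF wf] by auto
    moreover have "pi1s X s a (C1 @ C2 @ rwalk X C1)"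
      using less.hyps[of C2] less.prems(2) split pi1s_conj[OF wf split(2)] by auto
    ultimately have "pi1s X s a ((C1 @ C2) @ rwalk X C1 @ rwalk X (rwalk X C1) @ C3)"
      using pi1s_append[OF wf] rwalk_rwalk[OF wf walk_darts[OF split(2)]] by fastforce
    then show ?thesis using pi1s_cancel split(1) by fastforce
  qed
qed

lemma pi1s_append_conj_closed_walk:
  assumes wf: "wf_graph X" and "pi1s X s x W" "walk X x y W0" "walk X y y Q" "length Q \<le> s"
  shows "pi1s X s x (W @ W0 @ Q @ rwalk X W0)"
  using pi1s_append[OF wf assms(2) pi1s_conj[OF wf assms(3) closed_walk_in_pi1s[OF wf assms(4,5)]]] .

lemma pi1s_map:
  assumes Y: "wf_graph Y" and X: "wf_graph X" and p: "graph_hom Y p X"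
  shows "pi1s Y s z W \<Longrightarrow> pi1s X s (fst p z) (map (snd p) W)"
proof (induction rule: pi1s.induct)
  case empty
  then show ?case using graph_homD(1)[OF p] by (simp add: pi1s.empty)
next
  case (gen W y W0 Q)
  then have Q: "walk Y y y Q" by (simp add: cycle_walk_def)
  show ?case
    using pi1s_append_conj_closed_walk[OF X gen.IH graph_hom_walk[OF p Y X gen.hyps(2)]
        graph_hom_walk[OF p Y X Q]] gen.hyps(5)
    by (simp add: graph_hom_rwalk[OF p walk_darts[OF gen.hyps(2)]])
next
  case (gen_inv W y W0 Q)
  then have Q: "walk Y y y (rwalk Y Q)" using walk_rwalk[OF Y] by (simp add: cycle_walk_def)
  show ?case
    using pi1s_append_conj_closed_walk[OF X gen_inv.IH graph_hom_walk[OF p Y X gen_inv.hyps(2)]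
        graph_hom_walk[OF p Y X Q]] gen_inv.hyps(5)
    by (simp add: graph_hom_rwalk[OF p walk_darts[OF gen_inv.hyps(2)]])
next
  case (del A d B)
  have "d \<in> darts Y"
    using pi1s_closed_walk[OF Y del.hyps] walk_backtrack_iff[OF Y] by blast
  then show ?case
    using pi1s.del[of X s "fst p z" "map (snd p) A" "snd p d"] del.IH by (simp add: graph_homD[OF p])
next
  case (ins A B d)
  have "d \<in> darts Y" using ins.hyps(2) walk_backtrack_iff[OF Y] by blast
  moreover have "walk X (fst p z) (fst p z) (map (snd p) (A @ [d, dinv Y d] @ B))"
    using graph_hom_walk[OF p Y X ins.hyps(2)] .
  ultimately show ?case
    using pi1s.ins[of X s "fst p z" "map (snd p) A" "map (snd p) B" "snd p d"] ins.IH
    by (simp add: graph_homD[OF p])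
qed

section \<open>Local coverings\<close>

lemma local_covering_lifts_closed_iff:
  assumes lc: "local_covering s X' p X" and y': "y' \<in> verts X'"
    and W: "walk X (fst p y') (fst p y') W"
  shows "lifts_closed X' p y' W \<longleftrightarrow> pi1s X s (fst p y') W"
proof -
  have c: "covering X' p X" using lc by (simp add: local_covering_def)
  note X' = coveringD[OF c]
  obtain x0' where x0': "x0' \<in> verts X'"
    and char: "\<And>V. walk X (fst p x0') (fst p x0') V \<Longrightarrow>
      lifts_closed X' p x0' V \<longleftrightarrow> pi1s X s (fst p x0') V"
    using lc unfolding local_covering_def lifts_closed_def by blast
  obtain P' where P': "walk X' x0' y' P'" using X'(4)[OF x0' y'] by blast
  define P where "P = map (snd p) P'"
  have P: "walk X (fst p x0') (fst p y') P"
    unfolding P_def by (rule graph_hom_walk[OF X'(3,1,2) P'])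
  have "walk X (fst p x0') (fst p x0') (P @ W @ rwalk X P)"
    using P W walk_rwalk[OF X'(2) P] walk_appendI[OF X'(2)] by blast
  then have "lifts_closed X' p x0' (P @ W @ rwalk X P) \<longleftrightarrow>
      pi1s X s (fst p x0') (P @ W @ rwalk X P)"
    by (rule char)
  then show ?thesis
    using lifts_closed_conj_iff[OF c P'] pi1s_conj_iff[OF X'(2) P] by (simp add: P_def)
qed

lemma graph_hom_cycle_walk:
  assumes p: "graph_hom Y p X" and Q': "walk Y y y Q'" and Q: "cycle_walk X (map (snd p) Q')"
  shows "cycle_walk Y Q'"
proof -
  have darts: "set Q' \<subseteq> darts Y" using walk_darts[OF Q'] .
  have "map (fst p) (map (orig Y) Q') = map (orig X) (map (snd p) Q')"
    using darts by (auto simp: graph_homD(4)[OF p])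
  then have "distinct (map (orig Y) Q')"
    using Q by (metis cycle_walk_def distinct_map)
  moreover have "Q' ! i \<noteq> Q' ! j \<and> Q' ! i \<noteq> dinv Y (Q' ! j)"
    if "i < length Q'" "j < length Q'" "i \<noteq> j" for i j
  proof -
    have "Q' ! j \<in> darts Y" using darts that(2) by auto
    then have "snd p (dinv Y (Q' ! j)) = dinv X (snd p (Q' ! j))" by (rule graph_homD(3)[OF p])
    moreover have "snd p (Q' ! i) \<noteq> snd p (Q' ! j)" "snd p (Q' ! i) \<noteq> dinv X (snd p (Q' ! j))"
      using Q that unfolding cycle_walk_def by auto
    ultimately show ?thesis by metis
  qed
  moreover have "Q' \<noteq> []" using Q by (auto simp: cycle_walk_def)
  ultimately show ?thesis using Q' by (simp add: cycle_walk_def walk_def)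
qed

lemma local_covering_cycle_lift:
  assumes lc: "local_covering s Y p X" and y': "y' \<in> verts Y"
    and Q: "cycle_walk X Q" "orig X (hd Q) = fst p y'" "length Q \<le> s"
  obtains Q' where "cycle_walk Y Q'" "orig Y (hd Q') = y'" "map (snd p) Q' = Q"
proof -
  have c: "covering Y p X" using lc by (simp add: local_covering_def)
  note Y = coveringD[OF c]
  have y: "fst p y' \<in> verts X" using graph_homD(1)[OF Y(3) y'] .
  have W: "walk X (fst p y') (fst p y') Q" using Q by (simp add: cycle_walk_def)
  have "walk X (fst p y') (fst p y') []" using y by simp
  then have "pi1s X s (fst p y') ([] @ [] @ Q @ rwalk X [])"
    using pi1s.gen[OF pi1s.empty[OF y] _ Q] by blast
  then have "lifts_closed Y p y' Q"
    using local_covering_lifts_closed_iff[OF lc y' W] by simp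
  then obtain Q' where Q': "walk Y y' y' Q'" "map (snd p) Q' = Q"
    by (auto simp: lifts_closed_def)
  then have "cycle_walk Y Q'" using graph_hom_cycle_walk[OF Y(3)] Q(1) by blast
  moreover have "orig Y (hd Q') = y'" using Q' calculation by (simp add: cycle_walk_def walk_def)
  ultimately show ?thesis using that Q'(2) by blast
qed

lemma pi1s_lift_generators:
  assumes lc: "local_covering s Y p X" and "r \<le> s" and z: "z \<in> verts Y"
    and W': "pi1s Y r z W'" and W0: "walk X (fst p z) y W0"
    and Q: "cycle_walk X Q" "orig X (hd Q) = y" "length Q \<le> r"
  shows "\<exists>V'. map (snd p) V' = map (snd p) W' @ W0 @ Q @ rwalk X W0 \<and> pi1s Y r z V'"
    "\<exists>V'. map (snd p) V' = map (snd p) W' @ W0 @ rwalk X Q @ rwalk X W0 \<and> pi1s Y r z V'"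
proof -
  have c: "covering Y p X" using lc by (simp add: local_covering_def)
  note Y = coveringD[OF c]
  obtain W0' y' where W0': "walk Y z y' W0'" "map (snd p) W0' = W0" "fst p y' = y"
    using walk_lift_exists[OF c z W0] by blast
  obtain Q' where Q': "cycle_walk Y Q'" "orig Y (hd Q') = y'" "map (snd p) Q' = Q"
    using local_covering_cycle_lift[OF lc walk_verts[OF W0'(1), THEN conjunct2] Q(1)]
      Q(2,3) W0'(3) \<open>r \<le> s\<close> by auto
  have len: "length Q' \<le> r" using Q'(3) Q(3) by auto
  have "set Q' \<subseteq> darts Y" using Q'(1) unfolding cycle_walk_def by (metis walk_darts)
  then have maps: "map (snd p) (rwalk Y W0') = rwalk X W0" "map (snd p) (rwalk Y Q') = rwalk X Q"
    using W0'(2) Q'(3) by (simp_all add: graph_hom_rwalk[OF Y(3)] walk_darts[OF W0'(1)])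
  show "\<exists>V'. map (snd p) V' = map (snd p) W' @ W0 @ Q @ rwalk X W0 \<and> pi1s Y r z V'"
    using pi1s.gen[OF W' W0'(1) Q'(1,2) len] W0'(2) Q'(3) maps
    by (intro exI[of _ "W' @ W0' @ Q' @ rwalk Y W0'"]) simp
  show "\<exists>V'. map (snd p) V' = map (snd p) W' @ W0 @ rwalk X Q @ rwalk X W0 \<and> pi1s Y r z V'"
    using pi1s.gen_inv[OF W' W0'(1) Q'(1,2) len] W0'(2) maps
    by (intro exI[of _ "W' @ W0' @ rwalk Y Q' @ rwalk Y W0'"]) simp
qed

lemma covering_lift_backtrack_deletion:
  assumes c: "covering Y p X" and V': "walk Y z z V'" "map (snd p) V' = A @ [d, dinv X d] @ B"
  obtains A' B' d' where "V' = A' @ [d', dinv Y d'] @ B'" "map (snd p) A' = A" "map (snd p) B' = B"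
proof -
  note Y = coveringD[OF c]
  obtain A' D' B' a b where split: "V' = A' @ D' @ B'" "map (snd p) A' = A"
    "map (snd p) D' = [d, dinv X d]" "map (snd p) B' = B" "walk Y z a A'" "walk Y a b D'"
    "walk Y b z B'"
    by (rule walk_map_append3_split[OF Y(1) V'])
  then obtain d1 d2 where D': "D' = [d1, d2]" "snd p d2 = dinv X (snd p d1)"
    by (auto simp: map_eq_Cons_conv)
  have d: "d1 \<in> darts Y" "d2 \<in> darts Y" "orig Y d2 = tgt Y d1"
    using split(6) D'(1) by (auto simp: walk_Cons[OF Y(1)])
  have "d2 = dinv Y d1"
  proof (rule covering_dart_inj[OF c d(2)])
    show "dinv Y d1 \<in> darts Y" "orig Y d2 = orig Y (dinv Y d1)"
      using d by (simp_all add: wf_graphD[OF Y(1)])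
    show "snd p d2 = snd p (dinv Y d1)" using D'(2) d(1) by (simp add: graph_homD(3)[OF Y(3)])
  qed
  then show ?thesis using that split(1,2,4) D'(1) by simp
qed

lemma covering_lift_backtrack_insertion:
  assumes c: "covering Y p X" and V': "walk Y z z V'" "map (snd p) V' = A @ B"
    and W: "walk X (fst p z) (fst p z) (A @ [d, dinv X d] @ B)"
  obtains A' B' d' where "V' = A' @ B'" "map (snd p) A' = A" "map (snd p) B' = B" "snd p d' = d"
    "walk Y z z (A' @ [d', dinv Y d'] @ B')"
proof -
  note Y = coveringD[OF c]
  obtain A' B' a where split: "V' = A' @ B'" "map (snd p) A' = A" "map (snd p) B' = B"
    "walk Y z a A'" "walk Y a z B'"
    by (rule walk_map_append_split[OF Y(1) V'])
  obtain a0 where a0: "walk X (fst p z) a0 A" and d: "d \<in> darts X" "orig X d = a0"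
    using W walk_backtrack_iff[OF Y(2)] by blast
  have "walk X (fst p z) (fst p a) A"
    using graph_hom_walk[OF Y(3,1,2) split(4)] split(2) by simp
  then have "orig X d = fst p a" using walk_end_unique[OF a0] d(2) by simp
  then have d': "dart_lift Y p a d \<in> darts Y" "orig Y (dart_lift Y p a d) = a"
    "snd p (dart_lift Y p a d) = d"
    using dart_lift[OF c walk_verts[OF split(4), THEN conjunct2] d(1)] by simp_all
  then have "walk Y z z (A' @ [dart_lift Y p a d, dinv Y (dart_lift Y p a d)] @ B')"
    using split(4,5) walk_backtrack_iff[OF Y(1)] by blast
  then show ?thesis using that split(1-3) d'(3) by blast
qed

lemma pi1s_lift:
  assumes lc: "local_covering s Y p X" and "r \<le> s" and z: "z \<in> verts Y"
  shows "pi1s X r (fst p z) V \<Longrightarrow> \<exists>V'. map (snd p) V' = V \<and> pi1s Y r z V'"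
proof (induction rule: pi1s.induct)
  have c: "covering Y p X" using lc by (simp add: local_covering_def)
  note Y = coveringD[OF c]
  {
    case empty
    then show ?case using z by (auto intro: pi1s.empty)
  next
    case (gen W y W0 Q)
    then obtain W' where "map (snd p) W' = W" "pi1s Y r z W'" by blast
    then show ?case using pi1s_lift_generators(1)[OF lc \<open>r \<le> s\<close> z _ gen.hyps(2-5)] by blast
  next
    case (gen_inv W y W0 Q)
    then obtain W' where "map (snd p) W' = W" "pi1s Y r z W'" by blast
    then show ?case using pi1s_lift_generators(2)[OF lc \<open>r \<le> s\<close> z _ gen_inv.hyps(2-5)] by blast
  next
    case (del A d B)
    then obtain V' where V': "map (snd p) V' = A @ [d, dinv X d] @ B" "pi1s Y r z V'" by blast
    then obtain A' B' d' where "V' = A' @ [d', dinv Y d'] @ B'" "map (snd p) (A' @ B') = A @ B"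
      using covering_lift_backtrack_deletion[OF c pi1s_closed_walk[OF Y(1) V'(2)]] by (metis map_append)
    then show ?case using pi1s.del V'(2) by metis
  next
    case (ins A B d)
    then obtain V' where V': "map (snd p) V' = A @ B" "pi1s Y r z V'" by blast
    then obtain A' B' d' where split: "V' = A' @ B'" "map (snd p) A' = A" "map (snd p) B' = B"
      "snd p d' = d" "walk Y z z (A' @ [d', dinv Y d'] @ B')"
      using covering_lift_backtrack_insertion[OF c pi1s_closed_walk[OF Y(1) V'(2)] _ ins.hyps(2)]
      by blast
    then have "pi1s Y r z (A' @ [d', dinv Y d'] @ B')" using pi1s.ins V'(2) by (metis (no_types))
    moreover have "map (snd p) (A' @ [d', dinv Y d'] @ B') = A @ [d, dinv X d] @ B"
      using split(2-5) walk_darts[OF split(5)] by (simp add: graph_homD(3)[OF Y(3)])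
    ultimately show ?case by metis
  }
qed

lemma pi1s_map_iff:
  assumes lc: "local_covering s Y p X" and "r \<le> s" and W: "walk Y z z W"
  shows "pi1s X r (fst p z) (map (snd p) W) \<longleftrightarrow> pi1s Y r z W"
proof
  have c: "covering Y p X" using lc by (simp add: local_covering_def)
  assume "pi1s X r (fst p z) (map (snd p) W)"
  then obtain W' where W': "map (snd p) W' = map (snd p) W" "pi1s Y r z W'"
    using pi1s_lift[OF lc \<open>r \<le> s\<close>] walk_verts[OF W] by blast
  then have "W' = W"
    using walk_lift_unique[OF c pi1s_closed_walk[OF coveringD(1)[OF c] W'(2)] W] by blast
  then show "pi1s Y r z W" using W'(2) by simp
next
  have c: "covering Y p X" using lc by (simp add: local_covering_def)
  show "pi1s Y r z W \<Longrightarrow> pi1s X r (fst p z) (map (snd p) W)"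
    by (rule pi1s_map[OF coveringD(1-3)[OF c]])
qed

section \<open>Coverings with the same closed lifts are equivalent\<close>

definition lift_related ::
  "('v1, 'd1) graph \<Rightarrow> ('v1, 'd1, 'v, 'd) gmap \<Rightarrow> 'v1 \<Rightarrow>
   ('v2, 'd2) graph \<Rightarrow> ('v2, 'd2, 'v, 'd) gmap \<Rightarrow> 'v2 \<Rightarrow> 'v1 \<Rightarrow> 'v2 \<Rightarrow> bool" where
  "lift_related X1 p1 x1 X2 p2 x2 v w \<longleftrightarrow>
     (\<exists>P1 P2. walk X1 x1 v P1 \<and> walk X2 x2 w P2 \<and> map (snd p1) P1 = map (snd p2) P2)"

lemma lift_related_sym: "lift_related X1 p1 x1 X2 p2 x2 v w \<longleftrightarrow> lift_related X2 p2 x2 X1 p1 x1 w v"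
  unfolding lift_related_def by metis

lemma lift_related_verts: "lift_related X1 p1 x1 X2 p2 x2 v w \<Longrightarrow> v \<in> verts X1 \<and> w \<in> verts X2"
  unfolding lift_related_def by (metis walk_verts)

lemma lift_related_proj:
  assumes c1: "covering X1 p1 X" and c2: "covering X2 p2 X" and base: "fst p1 x1 = fst p2 x2"
    and R: "lift_related X1 p1 x1 X2 p2 x2 v w"
  shows "fst p1 v = fst p2 w"
proof -
  obtain P1 P2 where P: "walk X1 x1 v P1" "walk X2 x2 w P2" "map (snd p1) P1 = map (snd p2) P2"
    using R unfolding lift_related_def by blast
  have "walk X (fst p1 x1) (fst p1 v) (map (snd p1) P1)"
    using graph_hom_walk[OF coveringD(3,1,2)[OF c1] P(1)] .
  moreover have "walk X (fst p1 x1) (fst p2 w) (map (snd p1) P1)"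
    using graph_hom_walk[OF coveringD(3,1,2)[OF c2] P(2)] base P(3) by simp
  ultimately show ?thesis by (rule walk_end_unique)
qed

lemma lift_related_total:
  assumes c1: "covering X1 p1 X" and c2: "covering X2 p2 X" and base: "fst p1 x1 = fst p2 x2"
    and x1: "x1 \<in> verts X1" and x2: "x2 \<in> verts X2" and v: "v \<in> verts X1"
  shows "\<exists>w. lift_related X1 p1 x1 X2 p2 x2 v w"
proof -
  obtain P1 where P1: "walk X1 x1 v P1" using coveringD(4)[OF c1 x1 v] by blast
  have "walk X (fst p2 x2) (fst p1 v) (map (snd p1) P1)"
    using graph_hom_walk[OF coveringD(3,1,2)[OF c1] P1] base by simp
  then obtain P2 w where "walk X2 x2 w P2" "map (snd p2) P2 = map (snd p1) P1"
    using walk_lift_exists[OF c2 x2] by blast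
  then show ?thesis using P1 unfolding lift_related_def by metis
qed

lemma lift_related_step:
  assumes c1: "covering X1 p1 X" and c2: "covering X2 p2 X" and base: "fst p1 x1 = fst p2 x2"
    and R: "lift_related X1 p1 x1 X2 p2 x2 v w" and d: "d \<in> darts X1" "orig X1 d = v"
  shows "lift_related X1 p1 x1 X2 p2 x2 (tgt X1 d) (tgt X2 (dart_lift X2 p2 w (snd p1 d)))"
proof -
  note X1 = coveringD[OF c1] and X2 = coveringD[OF c2]
  obtain P1 P2 where P: "walk X1 x1 v P1" "walk X2 x2 w P2" "map (snd p1) P1 = map (snd p2) P2"
    using R unfolding lift_related_def by blast
  define d' where "d' = dart_lift X2 p2 w (snd p1 d)"
  have "snd p1 d \<in> darts X" "orig X (snd p1 d) = fst p2 w"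
    using d lift_related_proj[OF c1 c2 base R] by (auto simp: graph_homD[OF X1(3)])
  then have d': "d' \<in> darts X2" "orig X2 d' = w" "snd p2 d' = snd p1 d"
    using dart_lift[OF c2 lift_related_verts[OF R, THEN conjunct2]] by (simp_all add: d'_def)
  have "walk X1 x1 (tgt X1 d) (P1 @ [d])" using walk_snoc[OF X1(1) P(1) d] .
  moreover have "walk X2 x2 (tgt X2 d') (P2 @ [d'])" using walk_snoc[OF X2(1) P(2) d'(1,2)] .
  moreover have "map (snd p1) (P1 @ [d]) = map (snd p2) (P2 @ [d'])" using P(3) d'(3) by simp
  ultimately show ?thesis unfolding lift_related_def d'_def by blast
qed

lemma lift_related_unique:
  assumes c1: "covering X1 p1 X" and c2: "covering X2 p2 X"
    and closed: "\<And>W. lifts_closed X1 p1 x1 W \<Longrightarrow> lifts_closed X2 p2 x2 W"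
    and R: "lift_related X1 p1 x1 X2 p2 x2 v w" "lift_related X1 p1 x1 X2 p2 x2 v w'"
  shows "w = w'"
proof -
  note X1 = coveringD[OF c1] and X2 = coveringD[OF c2]
  obtain P1 P2 where P: "walk X1 x1 v P1" "walk X2 x2 w P2" "map (snd p1) P1 = map (snd p2) P2"
    using R(1) unfolding lift_related_def by blast
  obtain Q1 Q2 where Q: "walk X1 x1 v Q1" "walk X2 x2 w' Q2" "map (snd p1) Q1 = map (snd p2) Q2"
    using R(2) unfolding lift_related_def by blast
  have Q2_rev: "walk X2 w' x2 (rwalk X2 Q2)"
    "map (snd p2) (rwalk X2 Q2) = rwalk X (map (snd p2) Q2)"
    using Q(2) by (simp_all add: walk_rwalk X2 graph_hom_rwalk walk_darts)
  have "walk X1 x1 x1 (P1 @ rwalk X1 Q1)"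
    using P(1) walk_rwalk[OF X1(1) Q(1)] by (rule walk_appendI[OF X1(1)])
  moreover have "map (snd p1) (P1 @ rwalk X1 Q1) = map (snd p2) P2 @ rwalk X (map (snd p2) Q2)"
    using P(3) Q(3) by (simp add: graph_hom_rwalk[OF X1(3) walk_darts[OF Q(1)]])
  ultimately have "lifts_closed X2 p2 x2 (map (snd p2) P2 @ rwalk X (map (snd p2) Q2))"
    using closed unfolding lifts_closed_def by metis
  then obtain A' B' a where split: "map (snd p2) A' = map (snd p2) P2"
    "map (snd p2) B' = rwalk X (map (snd p2) Q2)" "walk X2 x2 a A'" "walk X2 a x2 B'"
    unfolding lifts_closed_def by (metis walk_map_append_split[OF X2(1)])
  have "a = w" using walk_lift_unique[OF c2 split(3) P(2) split(1)] by blast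
  moreover have "a = w'" using walk_lift_unique_end[OF c2 split(4) Q2_rev(1)] split(2) Q2_rev(2) by simp
  ultimately show ?thesis by simp
qed

lemma dart_lift_along:
  assumes c1: "covering X1 p1 X" and c2: "covering X2 p2 X"
    and hv: "\<And>v. v \<in> verts X1 \<Longrightarrow> hv v \<in> verts X2" "\<And>v. v \<in> verts X1 \<Longrightarrow> fst p2 (hv v) = fst p1 v"
    and d: "d \<in> darts X1"
  shows "dart_lift X2 p2 (hv (orig X1 d)) (snd p1 d) \<in> darts X2"
    "orig X2 (dart_lift X2 p2 (hv (orig X1 d)) (snd p1 d)) = hv (orig X1 d)"
    "snd p2 (dart_lift X2 p2 (hv (orig X1 d)) (snd p1 d)) = snd p1 d"
proof -
  note X1 = coveringD[OF c1]
  have "orig X1 d \<in> verts X1" using wf_graphD(1)[OF X1(1) d] .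
  moreover have "snd p1 d \<in> darts X" "orig X (snd p1 d) = fst p1 (orig X1 d)"
    using d by (simp_all add: graph_homD[OF X1(3)])
  ultimately show "dart_lift X2 p2 (hv (orig X1 d)) (snd p1 d) \<in> darts X2"
    "orig X2 (dart_lift X2 p2 (hv (orig X1 d)) (snd p1 d)) = hv (orig X1 d)"
    "snd p2 (dart_lift X2 p2 (hv (orig X1 d)) (snd p1 d)) = snd p1 d"
    using dart_lift[OF c2] hv by metis+
qed

lemma dart_lift_along_bij:
  assumes c1: "covering X1 p1 X" and c2: "covering X2 p2 X"
    and hv: "bij_betw hv (verts X1) (verts X2)" "\<And>v. v \<in> verts X1 \<Longrightarrow> fst p2 (hv v) = fst p1 v"
  shows "bij_betw (\<lambda>d. dart_lift X2 p2 (hv (orig X1 d)) (snd p1 d)) (darts X1) (darts X2)"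
    (is "bij_betw ?hd _ _")
proof -
  note X1 = coveringD[OF c1] and X2 = coveringD[OF c2]
  have hv_verts: "hv v \<in> verts X2" if "v \<in> verts X1" for v using bij_betwE[OF hv(1)] that by blast
  note hd = dart_lift_along[OF c1 c2 hv_verts hv(2)]
  show ?thesis
  proof (rule bij_betw_imageI)
    show "inj_on ?hd (darts X1)"
    proof (rule inj_onI)
      fix d d' assume d: "d \<in> darts X1" "d' \<in> darts X1" "?hd d = ?hd d'"
      then have "orig X1 d = orig X1 d'"
        using hd(2) bij_betw_imp_inj_on[OF hv(1)] wf_graphD(1)[OF X1(1)] by (metis inj_onD)
      then show "d = d'" using covering_dart_inj[OF c1 d(1,2)] hd(3) d by metis
    qed
    show "?hd ` darts X1 = darts X2"
    proof (intro subset_antisym subsetI)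
      fix f assume f: "f \<in> darts X2"
      then obtain v where v: "v \<in> verts X1" "hv v = orig X2 f"
        using wf_graphD(1)[OF X2(1) f] bij_betw_imp_surj_on[OF hv(1)] by (metis imageE)
      then have "snd p2 f \<in> darts X" "orig X (snd p2 f) = fst p1 v"
        using f hv(2)[OF v(1)] by (simp_all add: graph_homD[OF X2(3)])
      then obtain d where d: "d \<in> darts X1" "orig X1 d = v" "snd p1 d = snd p2 f"
        using dart_lift[OF c1 v(1)] by metis
      then have "?hd d = f" using dart_lift_unique[OF c2 f] v(2) by simp
      then show "f \<in> ?hd ` darts X1" using d(1) by blast
    qed (use hd(1) in blast)
  qed
qed

lemma equivalent_coverings_by_vertex_bij:
  assumes c1: "covering X1 p1 X" and c2: "covering X2 p2 X"
    and hv: "bij_betw hv (verts X1) (verts X2)" "\<And>v. v \<in> verts X1 \<Longrightarrow> fst p2 (hv v) = fst p1 v"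
    and tgt: "\<And>d. d \<in> darts X1 \<Longrightarrow>
      hv (tgt X1 d) = tgt X2 (dart_lift X2 p2 (hv (orig X1 d)) (snd p1 d))"
  shows "equivalent_coverings X1 p1 X2 p2"
proof -
  note X1 = coveringD[OF c1] and X2 = coveringD[OF c2]
  define hd where "hd d = dart_lift X2 p2 (hv (orig X1 d)) (snd p1 d)" for d
  have hv_verts: "hv v \<in> verts X2" if "v \<in> verts X1" for v using bij_betwE[OF hv(1)] that by blast
  have hd: "hd d \<in> darts X2" "orig X2 (hd d) = hv (orig X1 d)" "snd p2 (hd d) = snd p1 d"
    if "d \<in> darts X1" for d
    unfolding hd_def using dart_lift_along[OF c1 c2 hv_verts hv(2) that] by simp_all
  have hd_dinv: "hd (dinv X1 d) = dinv X2 (hd d)" if d: "d \<in> darts X1" for d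
  proof -
    have "orig X2 (dinv X2 (hd d)) = hv (orig X1 (dinv X1 d))"
      using tgt[OF d] hd(1)[OF d] wf_graphD[OF X1(1) d] wf_graphD[OF X2(1)] by (simp add: hd_def)
    moreover have "snd p2 (dinv X2 (hd d)) = snd p1 (dinv X1 d)"
      using hd[OF d] d by (simp add: graph_homD(3)[OF X1(3)] graph_homD(3)[OF X2(3)])
    ultimately show ?thesis
      using dart_lift_unique[OF c2 wf_graphD(3)[OF X2(1) hd(1)[OF d]]] by (simp add: hd_def)
  qed
  have "graph_hom X1 (hv, hd) X2"
    using hd hd_dinv hv_verts by (simp add: graph_hom_def)
  moreover have "bij_betw hd (darts X1) (darts X2)"
    unfolding hd_def by (rule dart_lift_along_bij[OF c1 c2 hv])
  ultimately show ?thesis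
    unfolding equivalent_coverings_def graph_iso_def using hv hd(3)
    by (intro exI[of _ "(hv, hd)"]) simp
qed

lemma lift_related_bij:
  assumes c1: "covering X1 p1 X" and c2: "covering X2 p2 X" and base: "fst p1 x1 = fst p2 x2"
    and x1: "x1 \<in> verts X1" and x2: "x2 \<in> verts X2"
    and closed12: "\<And>W. lifts_closed X1 p1 x1 W \<Longrightarrow> lifts_closed X2 p2 x2 W"
    and closed21: "\<And>W. lifts_closed X2 p2 x2 W \<Longrightarrow> lifts_closed X1 p1 x1 W"
  obtains hv where "bij_betw hv (verts X1) (verts X2)"
    "\<And>v w. lift_related X1 p1 x1 X2 p2 x2 v w \<longleftrightarrow> v \<in> verts X1 \<and> hv v = w"
proof -
  let ?R = "lift_related X1 p1 x1 X2 p2 x2"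
  have unique: "w = w'" if "?R v w" "?R v w'" for v w w'
    using lift_related_unique[OF c1 c2 closed12 that] .
  have unique': "v = v'" if "?R v w" "?R v' w" for v v' w
    using lift_related_unique[OF c2 c1 closed21 that[THEN lift_related_sym[THEN iffD1]]] .
  define hv where "hv v = (THE w. ?R v w)" for v
  have R_hv: "?R v (hv v)" if "v \<in> verts X1" for v
    using lift_related_total[OF c1 c2 base x1 x2 that] theI[of "?R v"] unique
    unfolding hv_def by metis
  have R_iff: "?R v w \<longleftrightarrow> v \<in> verts X1 \<and> hv v = w" for v w
    using R_hv unique lift_related_verts by metis
  have "bij_betw hv (verts X1) (verts X2)"
  proof (rule bij_betw_imageI)
    show "inj_on hv (verts X1)" using R_hv unique' by (metis inj_onI)
    show "hv ` verts X1 = verts X2"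
    proof (intro subset_antisym subsetI)
      fix w assume "w \<in> verts X2"
      then obtain v where "lift_related X2 p2 x2 X1 p1 x1 w v"
        using lift_related_total[OF c2 c1 base[symmetric] x2 x1] by blast
      then have "?R v w" by (rule lift_related_sym[THEN iffD2])
      then have "v \<in> verts X1 \<and> hv v = w" by (rule R_iff[THEN iffD1])
      then show "w \<in> hv ` verts X1" by blast
    qed (use lift_related_verts[OF R_hv] in blast)
  qed
  then show ?thesis using that R_iff by blast
qed

lemma equivalent_coverings_if_same_closed_lifts:
  assumes c1: "covering X1 p1 X" and c2: "covering X2 p2 X" and base: "fst p1 x1 = fst p2 x2"
    and x1: "x1 \<in> verts X1" and x2: "x2 \<in> verts X2"
    and closed: "\<And>W. walk X (fst p1 x1) (fst p1 x1) W \<Longrightarrow>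
      lifts_closed X1 p1 x1 W \<longleftrightarrow> lifts_closed X2 p2 x2 W"
  shows "equivalent_coverings X1 p1 X2 p2"
proof -
  note X1 = coveringD[OF c1] and X2 = coveringD[OF c2]
  have closed12: "lifts_closed X2 p2 x2 W" if "lifts_closed X1 p1 x1 W" for W
  proof -
    have "walk X (fst p1 x1) (fst p1 x1) W"
      using that graph_hom_walk[OF X1(3,1,2)] unfolding lifts_closed_def by blast
    then show ?thesis using closed that by blast
  qed
  have closed21: "lifts_closed X1 p1 x1 W" if "lifts_closed X2 p2 x2 W" for W
  proof -
    have "walk X (fst p2 x2) (fst p2 x2) W"
      using that graph_hom_walk[OF X2(3,1,2)] unfolding lifts_closed_def by blast
    then show ?thesis using closed that base by simp
  qed
  obtain hv where hv: "bij_betw hv (verts X1) (verts X2)"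
    "\<And>v w. lift_related X1 p1 x1 X2 p2 x2 v w \<longleftrightarrow> v \<in> verts X1 \<and> hv v = w"
    using lift_related_bij[OF c1 c2 base x1 x2 closed12 closed21] by blast
  show ?thesis
  proof (rule equivalent_coverings_by_vertex_bij[OF c1 c2 hv(1)])
    show "fst p2 (hv v) = fst p1 v" if "v \<in> verts X1" for v
      using lift_related_proj[OF c1 c2 base] hv(2) that by metis
    show "hv (tgt X1 d) = tgt X2 (dart_lift X2 p2 (hv (orig X1 d)) (snd p1 d))"
      if "d \<in> darts X1" for d
      using lift_related_step[OF c1 c2 base _ that] hv(2) wf_graphD(1)[OF X1(1) that] by metis
  qed
qed

lemma local_coverings_equivalent:
  assumes lc1: "local_covering s X1 p1 X" and lc2: "local_covering s X2 p2 X"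
  shows "equivalent_coverings X1 p1 X2 p2"
proof -
  have c1: "covering X1 p1 X" and c2: "covering X2 p2 X"
    using lc1 lc2 by (simp_all add: local_covering_def)
  obtain x1 where x1: "x1 \<in> verts X1"
    using c1 by (auto simp: covering_def connected_graph_def)
  then have "fst p1 x1 \<in> fst p2 ` verts X2"
    using c1 c2 by (auto simp: covering_def)
  then obtain x2 where x2: "x2 \<in> verts X2" and base: "fst p1 x1 = fst p2 x2"
    by auto
  show ?thesis
  proof (rule equivalent_coverings_if_same_closed_lifts[OF c1 c2 base x1 x2])
    fix W assume "walk X (fst p1 x1) (fst p1 x1) W"
    then show "lifts_closed X1 p1 x1 W \<longleftrightarrow> lifts_closed X2 p2 x2 W"
      using local_covering_lifts_closed_iff[OF lc1 x1] local_covering_lifts_closed_iff[OF lc2 x2] base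
      by simp
  qed
qed

section \<open>Factoring a local covering through another one\<close>

lemma lifts_closed_comp_iff:
  assumes p: "covering Y p X" and q: "graph_hom Z q Y" "wf_graph Z"
    and pq: "\<And>d. d \<in> darts Z \<Longrightarrow> snd pq d = snd p (snd q d)"
    and W: "walk Y (fst q z) (fst q z) W"
  shows "lifts_closed Z pq z (map (snd p) W) \<longleftrightarrow> lifts_closed Z q z W"
proof -
  have map_pq: "map (snd pq) W' = map (snd p) (map (snd q) W')" if "walk Z z z W'" for W'
    using walk_darts[OF that] pq by auto
  have "map (snd q) W' = W"
    if "walk Z z z W'" "map (snd p) (map (snd q) W') = map (snd p) W" for W'
    using walk_lift_unique[OF p graph_hom_walk[OF q(1,2) coveringD(1)[OF p] that(1)] W] that(2)
    by blast
  then show ?thesis unfolding lifts_closed_def using map_pq by metis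
qed

lemma local_covering_factor:
  assumes lcZ: "local_covering r Z pz X" and lcY: "local_covering s Y py X" and "r \<le> s"
    and q: "covering Z q Y"
    and comm: "\<And>v. v \<in> verts Z \<Longrightarrow> fst pz v = fst py (fst q v)"
      "\<And>d. d \<in> darts Z \<Longrightarrow> snd pz d = snd py (snd q d)"
  shows "local_covering r Z q Y"
proof -
  have cY: "covering Y py X" using lcY by (simp add: local_covering_def)
  note Z = coveringD[OF q] and Y = coveringD[OF cY]
  obtain z where z: "z \<in> verts Z"
    using q by (auto simp: covering_def connected_graph_def)
  have "lifts_closed Z q z W \<longleftrightarrow> pi1s Y r (fst q z) W"
    if W: "walk Y (fst q z) (fst q z) W" for W
  proof -
    have "walk X (fst pz z) (fst pz z) (map (snd py) W)"
      using graph_hom_walk[OF Y(3,1,2) W] comm(1)[OF z] by simp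
    then have "lifts_closed Z pz z (map (snd py) W) \<longleftrightarrow> pi1s X r (fst pz z) (map (snd py) W)"
      by (rule local_covering_lifts_closed_iff[OF lcZ z])
    then show ?thesis
      using lifts_closed_comp_iff[OF cY Z(3,1) comm(2) W] pi1s_map_iff[OF lcY \<open>r \<le> s\<close> W]
        comm(1)[OF z] by simp
  qed
  then show ?thesis
    using q z Z(3) unfolding local_covering_def lifts_closed_def by (blast dest: graph_homD(1))
qed

theorem lemma4p5:
  fixes G :: "('v, 'd) graph"
    and Gr :: "('v1, 'd1) graph" and Grr :: "('v2, 'd2) graph" and H :: "('v3, 'd3) graph"
    and pr :: "('v1, 'd1, 'v, 'd) gmap" and prr :: "('v2, 'd2, 'v, 'd) gmap"
    and q :: "('v1, 'd1, 'v2, 'd2) gmap" and p_rr :: "('v3, 'd3, 'v2, 'd2) gmap"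
    and r r' :: nat
  assumes "wf_graph G" and "connected_graph G" and "r \<le> r'"
    and "local_covering r Gr pr G"
    and "local_covering r' Grr prr G"
    and "covering Gr q Grr"
    and "\<forall>v\<in>verts Gr. fst pr v = fst prr (fst q v)"
    and "\<forall>d\<in>darts Gr. snd pr d = snd prr (snd q d)"
    and "local_covering r H p_rr Grr"
  shows "equivalent_coverings H p_rr Gr q
       \<and> equivalent_coverings Gr pr H (gcomp prr p_rr)
       \<and> isomorphic_graphs H Gr"
proof -
  have lc_q: "local_covering r Gr q Grr"
    using local_covering_factor[OF assms(4,5,3,6)] assms(7,8) by blast
  have E1: "equivalent_coverings H p_rr Gr q"
    using local_coverings_equivalent[OF assms(9) lc_q] .
  obtain h where h: "graph_iso Gr h H" "\<forall>v\<in>verts Gr. fst p_rr (fst h v) = fst q v"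
    "\<forall>d\<in>darts Gr. snd p_rr (snd h d) = snd q d"
    using local_coverings_equivalent[OF lc_q assms(9)] unfolding equivalent_coverings_def by blast
  then have "equivalent_coverings Gr pr H (gcomp prr p_rr)"
    unfolding equivalent_coverings_def gcomp_def using assms(7,8) by (intro exI[of _ h]) auto
  moreover have "isomorphic_graphs H Gr"
    using E1 unfolding equivalent_coverings_def isomorphic_graphs_def by blast
  ultimately show ?thesis using E1 by blast
qed

end
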